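(* Let $k\ge1$, let $\lambda,\lambda_1$ be functions $\mathfrak U\to\mathbb N$ with $\lambda(\mathcal U)^k\le\lambda_1(\mathcal U)<|\mathcal U|$ for all $\mathcal U\in\mathfrak U$, and let $R$ be a $k$-place relation such that for each $\mathcal U$, $R[\mathcal U]$ is a relation on a set $A[\mathcal U]\subseteq\mathcal U$ with $|A[\mathcal U]|\le\lambda(\mathcal U)$. Then $Q_R\le_{\mathrm{exp}}Q^{1-1}_{\lambda_1}$.
   Context: Framework: $\mathfrak U$ is a fixed nonempty family of finite sets. A relation $R$ of arity $k$ assigns to each $\mathcal U\in\mathfrak U$ a $k$-place relation $R[\mathcal U]$ on $\mathcal U$. A class $K$ assigns to each $\mathcal U$ a set $K[\mathcal U]$ of $n(K)$-place relations on $\mathcal U$ closed under permutations of $\mathcal U$; $\exists_K=Q_K$ is the second-order quantifier ranging over $K[\mathcal U]$; $Q_R$ is $Q_{K_R}$ where $K_R[\mathcal U]$ is the set of images of $R[\mathcal U]$ under permutations of $\mathcal U$. $Q_{K_1}\le_{\mathrm{exp}}Q_{K_2}$ (expressibility) means there is a formula $\varphi(x_0,\dots,x_{n(K_1)-1},S_0,\dots,S_{m-1})$ of first-order logic extended by the quantifier $Q_{K_2}$, the same for all $\mathcal U\in\mathfrak U$, such that for every $\mathcal U$ and every $R'\in K_1[\mathcal U]$ there are $S_0,\dots,S_{m-1}\in K_2[\mathcal U]$ with $R'=\{\bar a:(\mathcal U,\bar S)\models\varphi(\bar a)\}$. $Q^{1-1}_{\lambda_1}$ is the quantifier over graphs of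 partial one-to-one functions $f$ from $\mathcal U$ to $\mathcal U$ with $|\mathrm{dom}(f)|=\lambda_1(\mathcal U)$. *)

theory Defs
  imports Main
begin

text \<open>Universes are finite sets of elements of type 'a; the fixed family is
  a set of such sets.  An n-place relation on a universe U is a set of lists
  of length n with entries in U.\<close>

type_synonym 'a rel = "'a list set"

type_synonym 'a cls = "'a set \<Rightarrow> 'a rel set"

text \<open>Syntax of first-order logic (with equality) extended by one
  second-order quantifier Q_K.  First-order variables and relation variables
  are named by natural numbers.\<close>
datatype fm =
    Eq nat nat
  | Rel nat "nat list"
  | Neg fm
  | Conj fm fm
  | Ex nat fm
  | QK nat fm

fun fv :: "fm \<Rightarrow> nat set" where
  "fv (Eq i j) = {i, j}"
| "fv (Rel r xs) = set xs"
| "fv (Neg p) = fv p"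
| "fv (Conj p q) = fv p \<union> fv q"
| "fv (Ex x p) = fv p - {x}"
| "fv (QK X p) = fv p"

fun frv :: "fm \<Rightarrow> nat set" where
  "frv (Eq i j) = {}"
| "frv (Rel r xs) = {r}"
| "frv (Neg p) = frv p"
| "frv (Conj p q) = frv p \<union> frv q"
| "frv (Ex x p) = frv p"
| "frv (QK X p) = frv p - {X}"

fun sat :: "'a cls \<Rightarrow> 'a set \<Rightarrow> (nat \<Rightarrow> 'a) \<Rightarrow> (nat \<Rightarrow> 'a rel) \<Rightarrow> fm \<Rightarrow> bool" where
  "sat K U v \<rho> (Eq i j) = (v i = v j)"
| "sat K U v \<rho> (Rel r xs) = (map v xs \<in> \<rho> r)"
| "sat K U v \<rho> (Neg p) = (\<not> sat K U v \<rho> p)"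
| "sat K U v \<rho> (Conj p q) = (sat K U v \<rho> p \<and> sat K U v \<rho> q)"
| "sat K U v \<rho> (Ex x p) = (\<exists>a\<in>U. sat K U (v(x := a)) \<rho> p)"
| "sat K U v \<rho> (QK X p) = (\<exists>S\<in>K U. sat K U v (\<rho>(X := S)) p)"

text \<open>Expressibility Q_{K1} \<le>exp Q_{K2} over the family \<UU>, where n is the
  arity n(K1): one formula \<phi>(x_0..x_{n-1}, S_0..S_{m-1}) works for all
  universes.\<close>
definition expressible :: "'a set set \<Rightarrow> nat \<Rightarrow> 'a cls \<Rightarrow> 'a cls \<Rightarrow> bool" where
  "expressible \<UU> n K1 K2 \<longleftrightarrow>
     (\<exists>\<phi> m. fv \<phi> \<subseteq> {..<n} \<and> frv \<phi> \<subseteq> {..<m} \<and>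
        (\<forall>U\<in>\<UU>. \<forall>R'\<in>K1 U. \<exists>S::'a rel list. length S = m \<and> set S \<subseteq> K2 U \<and>
            R' = {as. length as = n \<and> set as \<subseteq> U \<and>
                      sat K2 U (\<lambda>i. as ! i) (\<lambda>i. S ! i) \<phi>}))"

definition K_R :: "('a set \<Rightarrow> 'a rel) \<Rightarrow> 'a cls" where
  "K_R R U = {map \<pi> ` R U | \<pi>. bij_betw \<pi> U U}"

definition K_11 :: "('a set \<Rightarrow> nat) \<Rightarrow> 'a cls" where
  "K_11 lam1 U = {{[x, f x] | x. x \<in> D} | D f.
      D \<subseteq> U \<and> card D = lam1 U \<and> inj_on f D \<and> f ` D \<subseteq> U}"

end

theory Submission
  imports Defs
begin

text \<open>Enumerate R' as t_0, ..., t_{N-1}, where N <= lam^k <= lam1,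
  and code t_j by an element c_j of U.  For each coordinate i two partial injections describe
  column i: one sends a value b to the code of the first tuple whose i-th entry is b, the other
  sends c_j to the code of the next tuple with the same i-th entry as t_j.  Then a_0 ... a_{k-1}
  lies in R' iff some code is reachable, for every i, from the first code of a_i along the i-th
  chain.  Reachability is expressed by quantifying over a successor-closed set, given as the
  fixed points of a graph in K_11; and since lam1 < |U|, every partial injection with at most
  lam1 arguments is coded by two such graphs, obtained by padding it, and the identity on its
  domain, without new fixed points.\<close>

lemma obtain_fixpoint_free_inj_on:
  assumes "finite P" "finite W" "card P < card W"
  obtains h where "inj_on h P" "h ` P \<subseteq> W" "\<forall>x\<in>P. h x \<noteq> x"
proof -
  have "\<exists>h. inj_on h P \<and> h ` P \<subseteq> W \<and> (\<forall>x\<in>P. h x \<noteq> x)"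
    using assms(1,3)
  proof (induction P rule: finite_induct)
    case (insert a P)
    then obtain h where h: "inj_on h P" "h ` P \<subseteq> W" "\<forall>x\<in>P. h x \<noteq> x"
      by auto
    have "card (insert a (h ` P)) \<le> Suc (card P)"
      using card_image_le[OF insert.hyps(1), of h] by (simp add: card_insert_if insert.hyps(1))
    also have "\<dots> < card W"
      using insert by simp
    finally have "\<not> W \<subseteq> insert a (h ` P)"
      using insert.hyps(1) card_mono[of "insert a (h ` P)" W] by auto
    then obtain w where w: "w \<in> W" "w \<notin> h ` P" "w \<noteq> a"
      by blast
    have "inj_on (h(a := w)) (insert a P)"
      using h(1) w insert.hyps(2) by (auto simp: inj_on_def)
    moreover have "(h(a := w)) ` insert a P \<subseteq> W"
      using h w insert.hyps(2) by auto
    moreover have "\<forall>x\<in>insert a P. (h(a := w)) x \<noteq> x"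
      using h(3) w(3) by auto
    ultimately show ?case
      by blast
  qed simp
  then show ?thesis
    using that by blast
qed

lemma extend_inj_on_fixpoint_free:
  assumes "finite U" "X \<subseteq> U" "inj_on f X" "f ` X \<subseteq> U" "card X \<le> n" "n < card U"
  obtains D g where "X \<subseteq> D" "D \<subseteq> U" "card D = n" "inj_on g D" "g ` D \<subseteq> U"
    "\<forall>x\<in>X. g x = f x" "\<forall>x\<in>D - X. g x \<noteq> x"
proof -
  have fin_X: "finite X"
    using assms(1,2) finite_subset by blast
  have "n - card X \<le> card (U - X)"
    using assms fin_X by (simp add: card_Diff_subset)
  then obtain P where P: "P \<subseteq> U - X" "card P = n - card X" "finite P"
    by (meson obtain_subset_with_card_n)
  have "card (U - f ` X) = card U - card X"
    using assms fin_X by (simp add: card_Diff_subset card_image)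
  then have "card P < card (U - f ` X)"
    using P(2) assms(5,6) by linarith
  then obtain h where h: "inj_on h P" "h ` P \<subseteq> U - f ` X" "\<forall>x\<in>P. h x \<noteq> x"
    using obtain_fixpoint_free_inj_on[OF P(3) finite_Diff[OF assms(1)]] by blast
  define g where "g x = (if x \<in> X then f x else h x)" for x
  have disj: "X \<inter> P = {}" "P \<inter> X = {}"
    using P(1) by auto
  have g_X: "\<forall>x\<in>X. g x = f x" and g_P: "\<forall>x\<in>P. g x = h x"
    using disj by (auto simp: g_def)
  then have "g ` X = f ` X" "inj_on g X" "g ` P = h ` P" "inj_on g P"
    using assms(3) h(1) by (metis image_cong, metis inj_on_cong, metis image_cong, metis inj_on_cong)
  then have "inj_on g (X \<union> P)"
    using h(2) disj by (auto simp: inj_on_Un Diff_triv)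
  moreover have "card (X \<union> P) = n"
    using P fin_X assms(5) by (subst card_Un_disjoint) auto
  moreover have "g ` (X \<union> P) \<subseteq> U" "\<forall>x\<in>(X \<union> P) - X. g x \<noteq> x"
    using assms(4) P(1) h(2,3) by (auto simp: g_def)
  moreover have "X \<subseteq> X \<union> P" "X \<union> P \<subseteq> U"
    using assms(2) P(1) by auto
  ultimately show ?thesis
    using that g_X by blast
qed

lemma graph_mem_K_11:
  assumes "D \<subseteq> U" "card D = lam1 U" "inj_on g D" "g ` D \<subseteq> U"
  shows "{[x, g x] | x. x \<in> D} \<in> K_11 lam1 U"
  using assms unfolding K_11_def by blast

lemma K_11_with_fixpoints:
  assumes "finite U" "M \<subseteq> U" "card M \<le> lam1 U" "lam1 U < card U"
  obtains G where "G \<in> K_11 lam1 U" "\<forall>x. [x, x] \<in> G \<longleftrightarrow> x \<in> M"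
proof -
  have "inj_on id M" "id ` M \<subseteq> U"
    using assms(2) by auto
  then obtain D g where Dg: "M \<subseteq> D" "D \<subseteq> U" "card D = lam1 U" "inj_on g D" "g ` D \<subseteq> U"
    "\<forall>x\<in>M. g x = id x" "\<forall>x\<in>D - M. g x \<noteq> x"
    using extend_inj_on_fixpoint_free[OF assms(1,2) _ _ assms(3,4)] by blast
  have "[x, x] \<in> {[y, g y] | y. y \<in> D} \<longleftrightarrow> x \<in> M" for x
    using Dg(1,6,7) by (auto, metis DiffI)
  then show ?thesis
    using that graph_mem_K_11[of D U lam1 g, OF Dg(2-5)] by blast
qed

text \<open>A partial injection F whose domain is too small to be a graph in K_11 is
  coded by two such graphs: S extends F, and the fixed points of T mark
  the domain of F.\<close>
definition decoded :: "'a rel \<Rightarrow> 'a rel \<Rightarrow> ('a \<times> 'a) set" where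
  "decoded S T = {(x, y). [x, x] \<in> T \<and> [x, y] \<in> S}"

lemma K_11_decoded:
  assumes "finite U" "F \<subseteq> U \<times> U" "single_valued F" "single_valued (F\<inverse>)"
    "card (Domain F) \<le> lam1 U" "lam1 U < card U"
  obtains S T where "S \<in> K_11 lam1 U" "T \<in> K_11 lam1 U" "decoded S T = F"
proof -
  define f where "f x = (THE y. (x, y) \<in> F)" for x
  have "f x = y" if "(x, y) \<in> F" for x y
    unfolding f_def using that assms(3) by (blast intro: the_equality dest: single_valuedD)
  then have F_f: "(x, y) \<in> F \<longleftrightarrow> x \<in> Domain F \<and> y = f x" for x y
    by blast
  have "inj_on f (Domain F)"
    using assms(4) F_f unfolding single_valued_def inj_on_def by blast
  moreover have "Domain F \<subseteq> U" "f ` Domain F \<subseteq> U"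
    using assms(2) F_f by auto
  ultimately obtain D g where Dg: "Domain F \<subseteq> D" "D \<subseteq> U" "card D = lam1 U" "inj_on g D"
    "g ` D \<subseteq> U" "\<forall>x\<in>Domain F. g x = f x"
    using extend_inj_on_fixpoint_free[of U "Domain F" f "lam1 U"] assms(1,5,6) by metis
  obtain T where "T \<in> K_11 lam1 U" "\<forall>x. [x, x] \<in> T \<longleftrightarrow> x \<in> Domain F"
    using K_11_with_fixpoints[of U "Domain F" lam1, OF assms(1) \<open>Domain F \<subseteq> U\<close> assms(5,6)] by blast
  moreover have "{[x, g x] | x. x \<in> D} \<in> K_11 lam1 U"
    using graph_mem_K_11[of D U lam1 g, OF Dg(2-5)] .
  moreover have "decoded {[x, g x] | x. x \<in> D} T = F"
    using calculation(2) Dg(1,6) F_f unfolding decoded_def by auto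
  ultimately show ?thesis
    using that by blast
qed

definition reaches_within :: "'a cls \<Rightarrow> 'a set \<Rightarrow> ('a \<times> 'a) set \<Rightarrow> 'a \<Rightarrow> 'a \<Rightarrow> bool" where
  "reaches_within K U F a c \<longleftrightarrow> (\<exists>G\<in>K U. [a, a] \<in> G \<and> [c, c] \<in> G \<and>
     (\<forall>x\<in>U. [x, x] \<in> G \<and> x \<noteq> c \<longrightarrow> (\<exists>y\<in>U. (x, y) \<in> F \<and> [y, y] \<in> G)))"

lemma rtrancl_if_successor_closed:
  assumes "wf (F\<inverse>)" "a \<in> M" "\<forall>x\<in>M. x \<noteq> c \<longrightarrow> (\<exists>y\<in>M. (x, y) \<in> F)"
  shows "(a, c) \<in> F\<^sup>*"
  using assms(1,2)
proof (induction a rule: wf_induct_rule)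
  case (less x)
  show ?case
  proof (cases "x = c")
    case False
    then obtain y where "y \<in> M" "(x, y) \<in> F"
      using assms(3) less.prems by blast
    then show ?thesis
      using less.IH by (meson converse_iff converse_rtrancl_into_rtrancl)
  qed simp
qed

lemma obtain_successor_closed_path:
  assumes "(a, c) \<in> F\<^sup>*"
  obtains M where "a \<in> M" "c \<in> M" "M \<subseteq> insert a (Range F)"
    "\<forall>x\<in>M. x \<noteq> c \<longrightarrow> (\<exists>y\<in>M. (x, y) \<in> F)"
proof
  let ?M = "{x. (a, x) \<in> F\<^sup>* \<and> (x, c) \<in> F\<^sup>*}"
  show "a \<in> ?M" "c \<in> ?M"
    using assms by auto
  show "?M \<subseteq> insert a (Range F)"
    by (auto elim: rtranclE)
  show "\<forall>x\<in>?M. x \<noteq> c \<longrightarrow> (\<exists>y\<in>?M. (x, y) \<in> F)"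
  proof (intro ballI impI)
    fix x
    assume "x \<in> ?M" "x \<noteq> c"
    then obtain y where "(x, y) \<in> F" "(y, c) \<in> F\<^sup>*" "(a, x) \<in> F\<^sup>*"
      by (auto elim: converse_rtranclE)
    then show "\<exists>y\<in>?M. (x, y) \<in> F"
      using rtrancl_into_rtrancl by fastforce
  qed
qed

lemma reaches_within_K_11_iff:
  assumes "finite U" "lam1 U < card U" "F \<subseteq> U \<times> U" "wf (F\<inverse>)" "a \<in> U"
    "card (insert a (Range F)) \<le> lam1 U"
  shows "reaches_within (K_11 lam1) U F a c \<longleftrightarrow> (a, c) \<in> F\<^sup>*"
proof
  assume "reaches_within (K_11 lam1) U F a c"
  then obtain G where G: "[a, a] \<in> G"
    "\<forall>x\<in>U. [x, x] \<in> G \<and> x \<noteq> c \<longrightarrow> (\<exists>y\<in>U. (x, y) \<in> F \<and> [y, y] \<in> G)"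
    unfolding reaches_within_def by blast
  have "a \<in> {x\<in>U. [x, x] \<in> G}"
    using G(1) assms(5) by simp
  moreover have "\<forall>x\<in>{x\<in>U. [x, x] \<in> G}. x \<noteq> c \<longrightarrow> (\<exists>y\<in>{x\<in>U. [x, x] \<in> G}. (x, y) \<in> F)"
    using G(2) by blast
  ultimately show "(a, c) \<in> F\<^sup>*"
    by (rule rtrancl_if_successor_closed[OF assms(4)])
next
  assume "(a, c) \<in> F\<^sup>*"
  then obtain M where M: "a \<in> M" "c \<in> M" "M \<subseteq> insert a (Range F)"
    "\<forall>x\<in>M. x \<noteq> c \<longrightarrow> (\<exists>y\<in>M. (x, y) \<in> F)"
    by (rule obtain_successor_closed_path)
  have "insert a (Range F) \<subseteq> U"
    using assms(3,5) by auto
  then have "M \<subseteq> U" "card M \<le> card (insert a (Range F))"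
    using M(3) assms(1) by (auto intro: card_mono finite_subset)
  then have "M \<subseteq> U" "card M \<le> lam1 U"
    using assms(6) by auto
  then obtain G where G: "G \<in> K_11 lam1 U" "\<forall>x. [x, x] \<in> G \<longleftrightarrow> x \<in> M"
    using K_11_with_fixpoints[of U M lam1] assms(1,2) by blast
  have "\<forall>x\<in>U. [x, x] \<in> G \<and> x \<noteq> c \<longrightarrow> (\<exists>y\<in>U. (x, y) \<in> F \<and> [y, y] \<in> G)"
    using M(4) G(2) assms(3) by blast
  then show "reaches_within (K_11 lam1) U F a c"
    unfolding reaches_within_def using G M(1,2) by blast
qed

fun conjs :: "fm list \<Rightarrow> fm" where
  "conjs [] = Eq 0 0"
| "conjs (p # ps) = Conj p (conjs ps)"

definition all_fm :: "nat \<Rightarrow> fm \<Rightarrow> fm" where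
  "all_fm x p = Neg (Ex x (Neg p))"

definition imp_fm :: "fm \<Rightarrow> fm \<Rightarrow> fm" where
  "imp_fm p q = Neg (Conj p (Neg q))"

definition decoded_fm :: "nat \<Rightarrow> nat \<Rightarrow> nat \<Rightarrow> nat \<Rightarrow> fm" where
  "decoded_fm S T x y = Conj (Rel T [x, x]) (Rel S [x, y])"

definition reaches_fm :: "nat \<Rightarrow> nat \<Rightarrow> nat \<Rightarrow> nat \<Rightarrow> nat \<Rightarrow> nat \<Rightarrow> nat \<Rightarrow> fm" where
  "reaches_fm S T X a c x y =
     QK X (Conj (Rel X [a, a]) (Conj (Rel X [c, c])
       (all_fm x (imp_fm (Conj (Rel X [x, x]) (Neg (Eq x c)))
          (Ex y (Conj (decoded_fm S T x y) (Rel X [y, y])))))))"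

text \<open>Variables 0, ..., k-1 hold the tuple and k the common code c; relation variables
  4i, 4i+1 code the chain relation of coordinate i, and 4i+2, 4i+3 its entry relation.\<close>
definition phi :: "nat \<Rightarrow> fm" where
  "phi k = Ex k (conjs (map (\<lambda>i. Ex (k + 1) (Conj (decoded_fm (4 * i + 2) (4 * i + 3) i (k + 1))
     (reaches_fm (4 * i) (4 * i + 1) (4 * k) (k + 1) k (k + 2) (k + 3)))) [0..<k]))"

lemma sat_conjs: "sat K U v \<rho> (conjs ps) \<longleftrightarrow> (\<forall>p\<in>set ps. sat K U v \<rho> p)"
  by (induction ps) auto

lemma sat_decoded_fm: "sat K U v \<rho> (decoded_fm S T x y) \<longleftrightarrow> (v x, v y) \<in> decoded (\<rho> S) (\<rho> T)"
  by (simp add: decoded_fm_def decoded_def)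

lemma sat_reaches_fm:
  assumes "X \<noteq> S" "X \<noteq> T" "x \<noteq> c" "y \<noteq> x" "y \<noteq> c"
  shows "sat K U v \<rho> (reaches_fm S T X a c x y) \<longleftrightarrow>
    reaches_within K U (decoded (\<rho> S) (\<rho> T)) (v a) (v c)"
  using assms by (auto simp: reaches_fm_def all_fm_def imp_fm_def sat_decoded_fm reaches_within_def)

lemma sat_phi:
  "sat K U v \<rho> (phi k) \<longleftrightarrow> (\<exists>c\<in>U. \<forall>i<k. \<exists>c0\<in>U.
     (v i, c0) \<in> decoded (\<rho> (4 * i + 2)) (\<rho> (4 * i + 3)) \<and>
     reaches_within K U (decoded (\<rho> (4 * i)) (\<rho> (4 * i + 1))) c0 c)"
  by (auto simp: phi_def sat_conjs sat_decoded_fm sat_reaches_fm atLeast0LessThan)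

lemma fv_conjs: "fv (conjs ps) \<subseteq> insert 0 (\<Union>(fv ` set ps))"
  by (induction ps) auto

lemma frv_conjs: "frv (conjs ps) = \<Union>(frv ` set ps)"
  by (induction ps) auto

lemma fv_phi: "0 < k \<Longrightarrow> fv (phi k) \<subseteq> {..<k}"
  using fv_conjs by (fastforce simp: phi_def reaches_fm_def all_fm_def imp_fm_def decoded_fm_def)

lemma frv_phi: "frv (phi k) \<subseteq> {..<4 * k}"
  by (auto simp: phi_def frv_conjs reaches_fm_def all_fm_def imp_fm_def decoded_fm_def)

text \<open>Position j of a list is coded by cs ! j and coloured by col j: first_code sends a colour
  to the code of its first position, next_code joins consecutive positions of equal colour.\<close>
definition first_code :: "(nat \<Rightarrow> 'b) \<Rightarrow> 'a list \<Rightarrow> ('b \<times> 'a) set" where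
  "first_code col cs = {(col j, cs ! j) | j. j < length cs \<and> (\<forall>l<j. col l \<noteq> col j)}"

definition next_code :: "(nat \<Rightarrow> 'b) \<Rightarrow> 'a list \<Rightarrow> ('a \<times> 'a) set" where
  "next_code col cs = {(cs ! j, cs ! j') | j j'. j < j' \<and> j' < length cs \<and> col j' = col j \<and>
     (\<forall>l. j < l \<and> l < j' \<longrightarrow> col l \<noteq> col j)}"

lemma first_code_subset: "first_code col cs \<subseteq> col ` {..<length cs} \<times> set cs"
  by (auto simp: first_code_def)

lemma next_code_subset: "next_code col cs \<subseteq> set cs \<times> set cs"
  by (auto simp: next_code_def)

lemma single_valued_first_code: "single_valued (first_code col cs)"
proof (rule single_valuedI)
  fix x y z
  assume "(x, y) \<in> first_code col cs" "(x, z) \<in> first_code col cs"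
  then obtain j j' where "x = col j" "y = cs ! j" "\<forall>l<j. col l \<noteq> col j"
    "x = col j'" "z = cs ! j'" "\<forall>l<j'. col l \<noteq> col j'"
    unfolding first_code_def by blast
  then show "y = z"
    by (metis linorder_neqE_nat)
qed

lemma single_valued_converse_first_code:
  assumes "distinct cs"
  shows "single_valued ((first_code col cs)\<inverse>)"
proof (rule single_valuedI)
  fix x y z
  assume "(x, y) \<in> (first_code col cs)\<inverse>" "(x, z) \<in> (first_code col cs)\<inverse>"
  then obtain j j' where
    "x = cs ! j" "y = col j" "j < length cs" "x = cs ! j'" "z = col j'" "j' < length cs"
    unfolding first_code_def by blast
  then show "y = z"
    using assms by (simp add: nth_eq_iff_index_eq)
qed

lemma single_valued_next_code:
  assumes "distinct cs"
  shows "single_valued (next_code col cs)"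
proof (rule single_valuedI)
  fix x y z
  assume "(x, y) \<in> next_code col cs" "(x, z) \<in> next_code col cs"
  then obtain j a j' b where
    "x = cs ! j" "y = cs ! a" "j < a" "a < length cs" "col a = col j"
    "\<forall>l. j < l \<and> l < a \<longrightarrow> col l \<noteq> col j"
    "x = cs ! j'" "z = cs ! b" "j' < b" "b < length cs" "col b = col j'"
    "\<forall>l. j' < l \<and> l < b \<longrightarrow> col l \<noteq> col j'"
    unfolding next_code_def by blast
  moreover from this have "j = j'"
    using assms by (simp add: nth_eq_iff_index_eq)
  ultimately show "y = z"
    by (metis linorder_neqE_nat)
qed

lemma single_valued_converse_next_code:
  assumes "distinct cs"
  shows "single_valued ((next_code col cs)\<inverse>)"
proof (rule single_valuedI)
  fix x y z
  assume "(x, y) \<in> (next_code col cs)\<inverse>" "(x, z) \<in> (next_code col cs)\<inverse>"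
  then obtain j a j' b where
    "y = cs ! j" "x = cs ! a" "j < a" "a < length cs" "col a = col j"
    "\<forall>l. j < l \<and> l < a \<longrightarrow> col l \<noteq> col j"
    "z = cs ! j'" "x = cs ! b" "j' < b" "b < length cs" "col b = col j'"
    "\<forall>l. j' < l \<and> l < b \<longrightarrow> col l \<noteq> col j'"
    unfolding next_code_def by blast
  moreover from this have "a = b"
    using assms by (simp add: nth_eq_iff_index_eq)
  ultimately show "y = z"
    by (metis linorder_neqE_nat)
qed

lemma wf_converse_next_code:
  assumes "distinct cs"
  shows "wf ((next_code col cs)\<inverse>)"
proof -
  let ?r = "{(j', j). j < j' \<and> j' < length cs}"
  have "wf ?r"
    by (rule wf_subset[OF wf_measure[of "\<lambda>j. length cs - j"]]) auto
  then have "wf (map_prod ((!) cs) ((!) cs) ` ?r)"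
    by (rule wf_map_prod_image_Dom_Ran) (use assms in \<open>auto simp: nth_eq_iff_index_eq\<close>)
  moreover have "(next_code col cs)\<inverse> \<subseteq> map_prod ((!) cs) ((!) cs) ` ?r"
    by (auto simp: next_code_def)
  ultimately show ?thesis
    by (rule wf_subset)
qed

lemma next_code_rtrancl:
  assumes "j \<le> j'" "j' < length cs" "col j' = col j"
  shows "(cs ! j, cs ! j') \<in> (next_code col cs)\<^sup>*"
  using assms
proof (induction j' rule: less_induct)
  case (less j')
  show ?case
  proof (cases "j = j'")
    case False
    let ?P = "{l. j \<le> l \<and> l < j' \<and> col l = col j}"
    define p where "p = Max ?P"
    have "finite ?P" "j \<in> ?P"
      using less.prems False by auto
    then have p: "p \<in> ?P" "\<forall>l\<in>?P. l \<le> p"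
      unfolding p_def using Max_in Max_ge by blast+
    have "col l \<noteq> col p" if "p < l" "l < j'" for l
    proof
      assume "col l = col p"
      then have "l \<in> ?P"
        using p(1) that by auto
      then show False
        using p(2) that(1) by auto
    qed
    moreover have "p < j'" "col j' = col p"
      using p(1) less.prems by auto
    ultimately have "(cs ! p, cs ! j') \<in> next_code col cs"
      using less.prems(2) unfolding next_code_def by blast
    moreover have "(cs ! j, cs ! p) \<in> (next_code col cs)\<^sup>*"
      by (rule less.IH) (use p(1) less.prems(2) in auto)
    ultimately show ?thesis
      by simp
  qed simp
qed

lemma next_code_rtrancl_col:
  assumes "distinct cs" "(cs ! j, y) \<in> (next_code col cs)\<^sup>*" "j < length cs"
  shows "\<exists>j'<length cs. y = cs ! j' \<and> col j' = col j"
  using assms(2)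
proof (induction rule: rtrancl_induct)
  case base
  then show ?case
    using assms(3) by blast
next
  case (step y z)
  then obtain j' where "j' < length cs" "y = cs ! j'" "col j' = col j"
    by blast
  moreover obtain a b where "y = cs ! a" "z = cs ! b" "a < b" "b < length cs" "col b = col a"
    using step(2) unfolding next_code_def by blast
  ultimately show ?case
    using assms(1) by (metis nth_eq_iff_index_eq order.strict_trans)
qed

lemma first_code_rtrancl_iff:
  assumes "distinct cs" "j < length cs"
  shows "(\<exists>c0. (b, c0) \<in> first_code col cs \<and> (c0, cs ! j) \<in> (next_code col cs)\<^sup>*) \<longleftrightarrow> col j = b"
proof
  assume "\<exists>c0. (b, c0) \<in> first_code col cs \<and> (c0, cs ! j) \<in> (next_code col cs)\<^sup>*"
  then obtain j0 where "b = col j0" "j0 < length cs" "(cs ! j0, cs ! j) \<in> (next_code col cs)\<^sup>*"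
    unfolding first_code_def by blast
  then show "col j = b"
    using next_code_rtrancl_col[OF assms(1)] assms by (metis nth_eq_iff_index_eq)
next
  assume "col j = b"
  define j0 where "j0 = (LEAST l. col l = b)"
  have "col j0 = b" "j0 \<le> j" "\<forall>l<j0. col l \<noteq> b"
    unfolding j0_def using \<open>col j = b\<close> by (auto intro: LeastI Least_le dest: not_less_Least)
  then have "(b, cs ! j0) \<in> first_code col cs" "(cs ! j0, cs ! j) \<in> (next_code col cs)\<^sup>*"
    using assms(2) \<open>col j = b\<close> next_code_rtrancl[of j0 j cs col] unfolding first_code_def by auto
  then show "\<exists>c0. (b, c0) \<in> first_code col cs \<and> (c0, cs ! j) \<in> (next_code col cs)\<^sup>*"
    by blast
qed

lemma mem_iff_code_chains:
  assumes "distinct cs" "length cs = length L" "\<forall>xs\<in>set L. length xs = k" "0 < k"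
    "length as = k" "set cs \<subseteq> C"
  shows "as \<in> set L \<longleftrightarrow> (\<exists>c\<in>C. \<forall>i<k. \<exists>c0\<in>C. (as ! i, c0) \<in> first_code (\<lambda>j. L ! j ! i) cs \<and>
    (c0, c) \<in> (next_code (\<lambda>j. L ! j ! i) cs)\<^sup>*)"
    (is "_ \<longleftrightarrow> (\<exists>c\<in>C. \<forall>i<k. ?chain i c)")
proof
  assume "as \<in> set L"
  then obtain j where j: "j < length cs" "L ! j = as"
    using assms(2) by (metis in_set_conv_nth)
  have "?chain i (cs ! j)" if "i < k" for i
    using first_code_rtrancl_iff[OF assms(1) j(1), of "as ! i" "\<lambda>j. L ! j ! i"] j(2)
      first_code_subset assms(6) by blast
  then show "\<exists>c\<in>C. \<forall>i<k. ?chain i c"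
    using j(1) assms(6) nth_mem by blast
next
  assume "\<exists>c\<in>C. \<forall>i<k. ?chain i c"
  then obtain c where chains: "\<forall>i<k. ?chain i c"
    by blast
  then obtain c0 where "c0 \<in> set cs" "(c0, c) \<in> (next_code (\<lambda>j. L ! j ! 0) cs)\<^sup>*"
    using assms(4) first_code_subset by blast
  then have "c \<in> set cs"
    using next_code_subset by (auto elim: rtranclE)
  then obtain j where j: "j < length cs" "c = cs ! j"
    by (metis in_set_conv_nth)
  have "L ! j ! i = as ! i" if "i < k" for i
    using chains that first_code_rtrancl_iff[OF assms(1) j(1), of "as ! i" "\<lambda>j. L ! j ! i"] j(2)
    by blast
  moreover have "length (L ! j) = k"
    using assms(2,3) j(1) by simp
  ultimately have "L ! j = as"
    using assms(5) by (simp add: nth_equalityI)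
  then show "as \<in> set L"
    using assms(2) j(1) nth_mem by fastforce
qed

lemma reaches_within_next_code_iff:
  assumes "finite U" "lam1 U < card U" "distinct cs" "set cs \<subseteq> U" "length cs \<le> lam1 U"
    "c0 \<in> set cs"
  shows "reaches_within (K_11 lam1) U (next_code col cs) c0 c \<longleftrightarrow> (c0, c) \<in> (next_code col cs)\<^sup>*"
proof (rule reaches_within_K_11_iff)
  show "next_code col cs \<subseteq> U \<times> U"
    using next_code_subset assms(4) by blast
  have "insert c0 (Range (next_code col cs)) \<subseteq> set cs"
    using next_code_subset assms(6) by blast
  then have "card (insert c0 (Range (next_code col cs))) \<le> card (set cs)"
    by (simp add: card_mono)
  then show "card (insert c0 (Range (next_code col cs))) \<le> lam1 U"
    using assms(3,5) by (simp add: distinct_card)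
qed (use assms wf_converse_next_code in auto)

lemma obtain_K_11_codes:
  assumes "finite U" "lam1 U < card U" "distinct cs" "set cs \<subseteq> U" "length cs \<le> lam1 U"
    "col ` {..<length cs} \<subseteq> U"
  obtains E where "set E \<subseteq> K_11 lam1 U" "length E = 4"
    "decoded (E ! 0) (E ! 1) = next_code col cs" "decoded (E ! 2) (E ! 3) = first_code col cs"
proof -
  have "card (Domain (next_code col cs)) \<le> card (set cs)"
    using next_code_subset by (intro card_mono) blast+
  then have "card (Domain (next_code col cs)) \<le> lam1 U"
    using assms(3,5) by (simp add: distinct_card)
  moreover have "next_code col cs \<subseteq> U \<times> U"
    using next_code_subset assms(4) by blast
  ultimately obtain SF TF where F: "SF \<in> K_11 lam1 U" "TF \<in> K_11 lam1 U"
    "decoded SF TF = next_code col cs"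
    using K_11_decoded[of U "next_code col cs" lam1, OF assms(1) _ single_valued_next_code[OF assms(3)]
      single_valued_converse_next_code[OF assms(3)] _ assms(2)] by blast
  have "card (Domain (first_code col cs)) \<le> card (col ` {..<length cs})"
    using first_code_subset by (intro card_mono) blast+
  also have "\<dots> \<le> lam1 U"
    using assms(5) card_image_le[of "{..<length cs}" col] by simp
  finally have "card (Domain (first_code col cs)) \<le> lam1 U" .
  moreover have "first_code col cs \<subseteq> U \<times> U"
    using first_code_subset assms(4,6) by blast
  ultimately obtain SG TG where G: "SG \<in> K_11 lam1 U" "TG \<in> K_11 lam1 U"
    "decoded SG TG = first_code col cs"
    using K_11_decoded[of U "first_code col cs" lam1, OF assms(1) _ single_valued_first_code
      single_valued_converse_first_code[OF assms(3)] _ assms(2)] by blast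
  show ?thesis
    using that[of "[SF, TF, SG, TG]"] F G by simp
qed

definition blocks :: "nat \<Rightarrow> nat \<Rightarrow> (nat \<Rightarrow> 'b list) \<Rightarrow> 'b list" where
  "blocks m k E = map (\<lambda>p. E (p div m) ! (p mod m)) [0..<m * k]"

lemma length_blocks: "length (blocks m k E) = m * k"
  by (simp add: blocks_def)

lemma nth_blocks:
  assumes "i < k" "r < m"
  shows "blocks m k E ! (m * i + r) = E i ! r"
proof -
  have "m * (i + 1) \<le> m * k"
    using assms(1) by (intro mult_le_mono2) simp
  then have "m * i + r < m * k"
    using assms(2) by simp
  moreover have "(m * i + r) div m = i" "(m * i + r) mod m = r"
    using assms(2) by simp_all
  ultimately show ?thesis
    by (simp add: blocks_def)
qed

lemma set_blocks_subset:
  assumes "\<forall>i<k. length (E i) = m \<and> set (E i) \<subseteq> B"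
  shows "set (blocks m k E) \<subseteq> B"
proof
  fix X
  assume "X \<in> set (blocks m k E)"
  then obtain p where p: "p < m * k" "X = E (p div m) ! (p mod m)"
    by (auto simp: blocks_def)
  moreover from this have "m \<noteq> 0"
    by (metis mult_0 not_less0)
  ultimately have "p div m < k" "p mod m < m"
    using less_mult_imp_div_less[of p k m] by (simp_all add: mult.commute)
  then show "X \<in> B"
    using assms p(2) nth_mem by fastforce
qed

lemma obtain_coded_enumeration:
  assumes "finite U" "finite X" "card X \<le> card U"
  obtains L cs where "set L = X" "distinct L" "distinct cs" "length cs = length L" "set cs \<subseteq> U"
proof -
  obtain L where L: "set L = X" "distinct L"
    using finite_distinct_list assms(2) by blast
  then obtain C where "C \<subseteq> U" "card C = length L"
    using assms(3) distinct_card obtain_subset_with_card_n by metis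
  moreover obtain cs where "set cs = C" "distinct cs"
    using finite_distinct_list finite_subset[OF \<open>C \<subseteq> U\<close> assms(1)] by blast
  ultimately show ?thesis
    using that L distinct_card by metis
qed

lemma sat_phi_code_blocks:
  assumes "finite U" "lam1 U < card U" "distinct cs" "set cs \<subseteq> U" "length cs \<le> lam1 U"
    and E: "\<forall>i<k. length (E i) = 4 \<and> decoded (E i ! 0) (E i ! 1) = next_code (col i) cs \<and>
      decoded (E i ! 2) (E i ! 3) = first_code (col i) cs"
  shows "sat (K_11 lam1) U v (\<lambda>p. blocks 4 k E ! p) (phi k) \<longleftrightarrow> (\<exists>c\<in>U. \<forall>i<k. \<exists>c0\<in>U.
    (v i, c0) \<in> first_code (col i) cs \<and> (c0, c) \<in> (next_code (col i) cs)\<^sup>*)"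
proof -
  have "(b, c0) \<in> decoded (blocks 4 k E ! (4 * i + 2)) (blocks 4 k E ! (4 * i + 3)) \<and>
      reaches_within (K_11 lam1) U (decoded (blocks 4 k E ! (4 * i)) (blocks 4 k E ! (4 * i + 1))) c0 c
      \<longleftrightarrow> (b, c0) \<in> first_code (col i) cs \<and> (c0, c) \<in> (next_code (col i) cs)\<^sup>*"
    if "i < k" for i b c0 c
  proof -
    have "decoded (blocks 4 k E ! (4 * i)) (blocks 4 k E ! (4 * i + 1)) = next_code (col i) cs"
      "decoded (blocks 4 k E ! (4 * i + 2)) (blocks 4 k E ! (4 * i + 3)) = first_code (col i) cs"
      using E that nth_blocks[OF that, of 0 4 E] nth_blocks[OF that, of 1 4 E]
        nth_blocks[OF that, of 2 4 E] nth_blocks[OF that, of 3 4 E] by auto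
    moreover have "(b, c0) \<in> first_code (col i) cs \<Longrightarrow> c0 \<in> set cs"
      using first_code_subset by blast
    ultimately show ?thesis
      using reaches_within_next_code_iff[of U lam1 cs c0 "col i" c, OF assms(1-5)] by auto
  qed
  then show ?thesis
    unfolding sat_phi by blast
qed

lemma phi_defines:
  assumes "finite U" "lam1 U < card U" "0 < k"
    "R' \<subseteq> {xs. length xs = k \<and> set xs \<subseteq> U}" "card R' \<le> lam1 U"
  shows "\<exists>S. length S = 4 * k \<and> set S \<subseteq> K_11 lam1 U \<and>
    R' = {as. length as = k \<and> set as \<subseteq> U \<and> sat (K_11 lam1) U (\<lambda>i. as ! i) (\<lambda>i. S ! i) (phi k)}"
proof -
  have "finite {xs. set xs \<subseteq> U \<and> length xs = k}"
    using finite_lists_length_eq[OF assms(1)] .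
  then have "finite R'"
    by (rule finite_subset[rotated]) (use assms(4) in auto)
  moreover have "card R' \<le> card U"
    using assms(2,5) by linarith
  ultimately obtain L cs where L: "set L = R'" "distinct L" and
    cs: "distinct cs" "length cs = length L" "set cs \<subseteq> U"
    using obtain_coded_enumeration[OF assms(1)] by blast
  have len_cs: "length cs \<le> lam1 U"
    using L assms(5) cs(2) distinct_card by metis
  define col where "col i j = L ! j ! i" for i j
  have "col i ` {..<length cs} \<subseteq> U" if "i < k" for i
    using L(1) assms(4) cs(2) that nth_mem unfolding col_def by fastforce
  then have "\<exists>E. set E \<subseteq> K_11 lam1 U \<and> length E = 4 \<and> decoded (E ! 0) (E ! 1) = next_code (col i) cs
      \<and> decoded (E ! 2) (E ! 3) = first_code (col i) cs" if "i < k" for i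
    by (rule obtain_K_11_codes[of U lam1 cs "col i", OF assms(1,2) cs(1,3) len_cs]) (use that in blast)+
  then obtain E where E: "\<forall>i<k. set (E i) \<subseteq> K_11 lam1 U \<and> length (E i) = 4 \<and>
      decoded (E i ! 0) (E i ! 1) = next_code (col i) cs \<and> decoded (E i ! 2) (E i ! 3) = first_code (col i) cs"
    by metis
  have sat_iff: "sat (K_11 lam1) U (\<lambda>i. as ! i) (\<lambda>p. blocks 4 k E ! p) (phi k) \<longleftrightarrow>
      (\<exists>c\<in>U. \<forall>i<k. \<exists>c0\<in>U. (as ! i, c0) \<in> first_code (col i) cs \<and> (c0, c) \<in> (next_code (col i) cs)\<^sup>*)"
    for as
    by (rule sat_phi_code_blocks[of U lam1 cs k E col, OF assms(1,2) cs(1,3) len_cs]) (use E in auto)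
  have "\<forall>xs\<in>set L. length xs = k"
    using L(1) assms(4) by auto
  then have mem_iff: "as \<in> R' \<longleftrightarrow> length as = k \<and> set as \<subseteq> U \<and>
      (\<exists>c\<in>U. \<forall>i<k. \<exists>c0\<in>U. (as ! i, c0) \<in> first_code (col i) cs \<and> (c0, c) \<in> (next_code (col i) cs)\<^sup>*)"
    for as
  proof (cases "length as = k")
    case True
    then show ?thesis
      using mem_iff_code_chains[OF cs(1,2) \<open>\<forall>xs\<in>set L. length xs = k\<close> assms(3) True cs(3)]
        L(1) assms(4) unfolding col_def by blast
  qed (use assms(4) in auto)
  have "R' = {as. length as = k \<and> set as \<subseteq> U \<and>
      sat (K_11 lam1) U (\<lambda>i. as ! i) (\<lambda>p. blocks 4 k E ! p) (phi k)}"
    by (simp add: set_eq_iff sat_iff mem_iff)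
  moreover have "set (blocks 4 k E) \<subseteq> K_11 lam1 U"
    using set_blocks_subset E by blast
  ultimately show ?thesis
    using length_blocks by blast
qed

lemma K_R_tuples:
  assumes "finite U" "A \<subseteq> U" "R U \<subseteq> {xs. length xs = k \<and> set xs \<subseteq> A}" "R' \<in> K_R R U"
  shows "R' \<subseteq> {xs. length xs = k \<and> set xs \<subseteq> U}" "card R' \<le> card A ^ k"
proof -
  obtain \<pi> where \<pi>: "bij_betw \<pi> U U" "R' = map \<pi> ` R U"
    using assms(4) unfolding K_R_def by blast
  have "\<pi> ` A \<subseteq> U"
    using \<pi>(1) assms(2) bij_betw_imp_surj_on by blast
  then show "R' \<subseteq> {xs. length xs = k \<and> set xs \<subseteq> U}"
    using \<pi>(2) assms(3) by force
  have fin: "finite {xs. set xs \<subseteq> A \<and> length xs = k}"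
    using finite_lists_length_eq[OF finite_subset[OF assms(2,1)]] .
  have "R U \<subseteq> {xs. set xs \<subseteq> A \<and> length xs = k}"
    using assms(3) by auto
  then have "finite (R U)" "card (R U) \<le> card {xs. set xs \<subseteq> A \<and> length xs = k}"
    using finite_subset[OF _ fin] card_mono[OF fin] by auto
  moreover have "card R' \<le> card (R U)"
    using \<pi>(2) card_image_le[OF \<open>finite (R U)\<close>] by simp
  moreover have "card {xs. set xs \<subseteq> A \<and> length xs = k} = card A ^ k"
    using card_lists_length_eq[OF finite_subset[OF assms(2,1)]] .
  ultimately show "card R' \<le> card A ^ k"
    by linarith
qed

theorem claim3p7:
  fixes \<UU> :: "'a set set" and k :: nat
    and lam lam1 :: "'a set \<Rightarrow> nat"
    and R :: "'a set \<Rightarrow> 'a rel" and A :: "'a set \<Rightarrow> 'a set"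
  assumes "\<UU> \<noteq> {}"
    and "\<forall>U\<in>\<UU>. finite U"
    and "k \<ge> 1"
    and "\<forall>U\<in>\<UU>. lam U ^ k \<le> lam1 U \<and> lam1 U < card U"
    and "\<forall>U\<in>\<UU>. A U \<subseteq> U \<and> card (A U) \<le> lam U"
    and "\<forall>U\<in>\<UU>. R U \<subseteq> {xs. length xs = k \<and> set xs \<subseteq> A U}"
  shows "expressible \<UU> k (K_R R) (K_11 lam1)"
proof -
  have "\<forall>U\<in>\<UU>. \<forall>R'\<in>K_R R U. \<exists>S. length S = 4 * k \<and> set S \<subseteq> K_11 lam1 U \<and>
      R' = {as. length as = k \<and> set as \<subseteq> U \<and> sat (K_11 lam1) U (\<lambda>i. as ! i) (\<lambda>i. S ! i) (phi k)}"
  proof (intro ballI)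
    fix U R'
    assume "U \<in> \<UU>" "R' \<in> K_R R U"
    then have U: "finite U" "A U \<subseteq> U" "card (A U) \<le> lam U" "lam U ^ k \<le> lam1 U" "lam1 U < card U"
      "R U \<subseteq> {xs. length xs = k \<and> set xs \<subseteq> A U}" and R': "R' \<in> K_R R U"
      using assms(2,4,5,6) by auto
    have "card R' \<le> card (A U) ^ k"
      using K_R_tuples(2)[OF U(1,2,6) R'] .
    also have "\<dots> \<le> lam1 U"
      using U(3,4) power_mono[of "card (A U)" "lam U" k] by simp
    finally show "\<exists>S. length S = 4 * k \<and> set S \<subseteq> K_11 lam1 U \<and>
      R' = {as. length as = k \<and> set as \<subseteq> U \<and> sat (K_11 lam1) U (\<lambda>i. as ! i) (\<lambda>i. S ! i) (phi k)}"
      using phi_defines[of U lam1 k R'] U(1,5) K_R_tuples(1)[OF U(1,2,6) R'] assms(3) by simp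
  qed
  moreover have "fv (phi k) \<subseteq> {..<k}"
    using fv_phi assms(3) by simp
  ultimately show ?thesis
    unfolding expressible_def using frv_phi by blast
qed

end
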